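(* For every $n\ge 2$, the diameter of the origami flip graph ${\rm OFG}(M_{2,n})$ is $\lceil n^2/2\rceil$.
   Context: The $2\times n$ Miura-ori $M_{2,n}$ has faces $\alpha_{i,j}$ ($i\in\{1,2\}$, $j\in\{1,\dots,n\}$), interior vertices $x_1,\dots,x_{n-1}$, and creases $e_0$ and $e_{3k-1},e_{3k},e_{3k+1}$ ($k=1,\dots,n-1$). At $x_k$ the creases are left $e_{3k-3}$, top $e_{3k-1}$, right $e_{3k}$, bottom $e_{3k+1}$ (angles adjacent to the left crease obtuse, others acute). Face $\alpha_{1,j}$ is bordered by those of $e_{3j-4}$ (iff $j\ge2$), $e_{3j-3}$, $e_{3j-1}$ (iff $j\le n-1$); $\alpha_{2,j}$ by those of $e_{3j-2}$ (iff $j\ge2$), $e_{3j-3}$, $e_{3j+1}$ (iff $j\le n-1$). An MV assignment $\mu$ maps creases to $\{1,-1\}$; it is locally valid if for each $k$ exactly one of $\mu(e_{3k-1}),\mu(e_{3k}),\mu(e_{3k+1})$ differs from $\mu(e_{3k-3})$. The face flip $\mu_\alpha$ negates $\mu$ on the creases bordering $\alpha$; $\alpha$ is flippable under $\mu$ if $\mu,\mu_\alpha$ are both locally valid. ${\rm OFG}(M_{2,n})$ is the graph whose vertices are the locally valid MV assignments, with $\mu\sim\mu_\alpha$ for each flippable $\alpha$. *)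

theory Defs
  imports Complex_Main "HOL-Library.Extended_Nat"
begin

text \<open>Miura-ori M_{2,n}. Creases are indexed by natural numbers: crease e_i has index i.
  The creases are e_0 and e_{3k-1}, e_{3k}, e_{3k+1} for k = 1..n-1.\<close>

definition creases :: "nat \<Rightarrow> nat set" where
  "creases n = {0} \<union> (\<Union>k\<in>{1..n-1}. {3*k-1, 3*k, 3*k+1})"

definition faces :: "nat \<Rightarrow> (nat \<times> nat) set" where
  "faces n = {1,2} \<times> {1..n}"

definition border :: "nat \<Rightarrow> nat \<times> nat \<Rightarrow> nat set" where
  "border n f = (case f of (i, j) \<Rightarrow>
     if i = 1 then (if j \<ge> 2 then {3*j-4} else {}) \<union> {3*j-3} \<union> (if j \<le> n-1 then {3*j-1} else {})
     else (if j \<ge> 2 then {3*j-2} else {}) \<union> {3*j-3} \<union> (if j \<le> n-1 then {3*j+1} else {}))"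

text \<open>MV assignments: maps creases to {1,-1}; represented as functions nat => int
  which are 0 outside the crease set (so that assignments are determined by their
  values on creases).\<close>
definition mv_assignment :: "nat \<Rightarrow> (nat \<Rightarrow> int) \<Rightarrow> bool" where
  "mv_assignment n \<mu> \<longleftrightarrow> (\<forall>e\<in>creases n. \<mu> e \<in> {1, -1}) \<and> (\<forall>e. e \<notin> creases n \<longrightarrow> \<mu> e = 0)"

text \<open>Local validity: at each interior vertex x_k exactly one of the top, right, bottom
  creases differs from the left crease.\<close>
definition locally_valid :: "nat \<Rightarrow> (nat \<Rightarrow> int) \<Rightarrow> bool" where
  "locally_valid n \<mu> \<longleftrightarrow>
     (\<forall>k\<in>{1..n-1}. card {e \<in> {3*k-1, 3*k, 3*k+1}. \<mu> e \<noteq> \<mu> (3*k-3)} = 1)"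

definition face_flip :: "nat \<Rightarrow> (nat \<Rightarrow> int) \<Rightarrow> nat \<times> nat \<Rightarrow> (nat \<Rightarrow> int)" where
  "face_flip n \<mu> f = (\<lambda>e. if e \<in> border n f then - \<mu> e else \<mu> e)"

definition flippable :: "nat \<Rightarrow> (nat \<Rightarrow> int) \<Rightarrow> nat \<times> nat \<Rightarrow> bool" where
  "flippable n \<mu> f \<longleftrightarrow> locally_valid n \<mu> \<and> locally_valid n (face_flip n \<mu> f)"

definition ofg_vertices :: "nat \<Rightarrow> (nat \<Rightarrow> int) set" where
  "ofg_vertices n = {\<mu>. mv_assignment n \<mu> \<and> locally_valid n \<mu>}"

definition ofg_edges :: "nat \<Rightarrow> ((nat \<Rightarrow> int) \<times> (nat \<Rightarrow> int)) set" where
  "ofg_edges n = {(\<mu>, \<nu>). \<mu> \<in> ofg_vertices n \<and>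
      (\<exists>f\<in>faces n. flippable n \<mu> f \<and> \<nu> = face_flip n \<mu> f)}"

text \<open>Graph distance (infinite if no path) and diameter.\<close>
definition ofg_dist :: "nat \<Rightarrow> (nat \<Rightarrow> int) \<Rightarrow> (nat \<Rightarrow> int) \<Rightarrow> enat" where
  "ofg_dist n \<mu> \<nu> = (INF k\<in>{k. (\<mu>, \<nu>) \<in> (ofg_edges n) ^^ k}. enat k)"

definition ofg_diameter :: "nat \<Rightarrow> enat" where
  "ofg_diameter n = (SUP \<mu>\<in>ofg_vertices n. SUP \<nu>\<in>ofg_vertices n. ofg_dist n \<mu> \<nu>)"

end

theory Submission
  imports Defs
begin

text \<open>A locally valid MV assignment of M_{2,n} is the same thing as a height function
  g on {0..<n} with steps \<open>\<bar>g (j + 1) - g j\<bar> \<le> 1\<close>, taken modulo adding an even constant: the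
  horizontal crease e_{3j} is \<open>(-1)^(g j + j)\<close>, and the creases at each interior vertex record
  the step of g there. A face flip is exactly a change of one value of g by one, so the distance
  between two assignments with lifts g and h is the minimum over c of \<open>\<Sum>j<n. \<bar>g j - h j - 2c\<bar>\<close>.
  As g - h moves by at most 2 per step, centring 2c in the middle and peeling off both ends
  bounds this by \<open>\<lceil>n\<^sup>2/2\<rceil>\<close>, while for g j = j and h j = -j - 1 every c gives
  \<open>\<Sum>j<n. \<bar>2j + 1 - 2c\<bar> \<ge> \<lceil>n\<^sup>2/2\<rceil>\<close>.\<close>

section \<open>Height functions and their MV assignments\<close>

definition parity_sign :: "int \<Rightarrow> int" where
  "parity_sign x = (if even x then 1 else -1)"

lemma parity_sign_cases: "parity_sign x = 1 \<or> parity_sign x = -1"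
  by (simp add: parity_sign_def)

lemma parity_sign_add_unit: "s = 1 \<or> s = -1 \<Longrightarrow> parity_sign (x + s) = - parity_sign x"
  by (auto simp: parity_sign_def)

lemma parity_sign_add_even: "even y \<Longrightarrow> parity_sign (x + y) = parity_sign x"
  by (simp add: parity_sign_def)

lemma parity_sign_eq_iff: "parity_sign x = parity_sign y \<longleftrightarrow> even (x - y)"
  by (simp add: parity_sign_def)

definition height_fun :: "nat \<Rightarrow> (nat \<Rightarrow> int) \<Rightarrow> bool" where
  "height_fun n g \<longleftrightarrow> (\<forall>j. Suc j < n \<longrightarrow> \<bar>g (Suc j) - g j\<bar> \<le> 1)"

lemma height_funD: "height_fun n g \<Longrightarrow> Suc j < n \<Longrightarrow> \<bar>g (Suc j) - g j\<bar> \<le> 1"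
  by (simp add: height_fun_def)

definition vertex_crease :: "int \<Rightarrow> int \<Rightarrow> int \<Rightarrow> int" where
  "vertex_crease L a b = (if a = b then L else a - b)"

text \<open>The interior vertex x_{k+1} has left crease e_{3k}, top e_{3k+2}, right e_{3k+3} and
  bottom e_{3k+4}. Between the heights a = g k and b = g (k + 1) its top crease is a - b and its
  bottom crease b - a, except that both copy the left crease where a = b.\<close>

definition mv_of :: "nat \<Rightarrow> (nat \<Rightarrow> int) \<Rightarrow> nat \<Rightarrow> int" where
  "mv_of n g e =
     (if e \<notin> creases n then 0
      else let q = e div 3 in
        if e mod 3 = 0 then parity_sign (g q + int q)
        else if e mod 3 = 2 then vertex_crease (parity_sign (g q + int q)) (g q) (g (Suc q))
        else vertex_crease (parity_sign (g (q - 1) + int (q - 1))) (g q) (g (q - 1)))"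

lemma horizontal_in_creases: "j < n \<Longrightarrow> 3 * j \<in> creases n"
  unfolding creases_def by (cases "j = 0") (auto intro!: bexI[of _ j])

lemma top_in_creases: "Suc k < n \<Longrightarrow> 3 * k + 2 \<in> creases n"
  unfolding creases_def by (rule UnI2, rule UN_I[of "Suc k"]) auto

lemma bottom_in_creases: "Suc k < n \<Longrightarrow> 3 * k + 4 \<in> creases n"
  unfolding creases_def by (rule UnI2, rule UN_I[of "Suc k"]) auto

lemma crease_cases [consumes 2]:
  assumes "e \<in> creases n" and "0 < n"
  obtains (horizontal) j where "j < n" "e = 3 * j"
    | (top) k where "Suc k < n" "e = 3 * k + 2"
    | (bottom) k where "Suc k < n" "e = 3 * k + 4"
proof -
  consider "e = 0" | k where "1 \<le> k" "k < n" "e \<in> {3 * k - 1, 3 * k, 3 * k + 1}"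
    using assms(1) unfolding creases_def by auto
  then show thesis
  proof cases
    case 1
    then show thesis using horizontal[of 0] assms(2) by simp
  next
    case (2 k)
    then obtain k' where k': "k = Suc k'" by (cases k) auto
    show thesis using 2 horizontal[of k] top[of k'] bottom[of "k'"] unfolding k' by auto
  qed
qed

lemma mv_of_outside: "e \<notin> creases n \<Longrightarrow> mv_of n g e = 0"
  by (simp add: mv_of_def)

lemma mv_of_horizontal: "j < n \<Longrightarrow> mv_of n g (3 * j) = parity_sign (g j + int j)"
  by (simp add: mv_of_def horizontal_in_creases)

lemma mv_of_top:
  "Suc k < n \<Longrightarrow>
    mv_of n g (3 * k + 2) = vertex_crease (parity_sign (g k + int k)) (g k) (g (Suc k))"
proof -
  have "(3 * k + 2) div 3 = k" "(3 * k + 2) mod 3 = 2" by presburger+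
  then show "Suc k < n \<Longrightarrow> ?thesis" using top_in_creases[of k n] by (simp add: mv_of_def)
qed

lemma mv_of_bottom:
  "Suc k < n \<Longrightarrow>
    mv_of n g (3 * k + 4) = vertex_crease (parity_sign (g k + int k)) (g (Suc k)) (g k)"
proof -
  have "(3 * k + 4) div 3 = Suc k" "(3 * k + 4) mod 3 = 1" by presburger+
  then show "Suc k < n \<Longrightarrow> ?thesis" using bottom_in_creases[of k n] by (simp add: mv_of_def)
qed

lemma mv_of_right_horizontal:
  "Suc k < n \<Longrightarrow> mv_of n g (3 * k + 3) = parity_sign (g (Suc k) + int k + 1)"
  using mv_of_horizontal[of "Suc k" n g] by (simp add: add_ac)

definition exactly_one :: "bool \<Rightarrow> bool \<Rightarrow> bool \<Rightarrow> bool" where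
  "exactly_one P Q R \<longleftrightarrow> (P \<and> \<not> Q \<and> \<not> R) \<or> (\<not> P \<and> Q \<and> \<not> R) \<or> (\<not> P \<and> \<not> Q \<and> R)"

lemma card_filter_three_eq_1_iff:
  assumes "a \<noteq> b" "a \<noteq> c" "b \<noteq> c"
  shows "card {e \<in> {a, b, c}. P e} = 1 \<longleftrightarrow> exactly_one (P a) (P b) (P c)"
proof -
  have filter_eq: "{e \<in> {a, b, c}. P e} =
      (if P a then {a} else {}) \<union> (if P b then {b} else {}) \<union> (if P c then {c} else {})"
    by auto
  show ?thesis
    unfolding filter_eq using assms
    by (cases "P a"; cases "P b"; cases "P c") (simp_all add: exactly_one_def card_insert_if)
qed

lemma locally_valid_iff:
  "locally_valid n \<mu> \<longleftrightarrow> (\<forall>k. Suc k < n \<longrightarrow> exactly_one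
     (\<mu> (3 * k + 2) \<noteq> \<mu> (3 * k)) (\<mu> (3 * k + 3) \<noteq> \<mu> (3 * k)) (\<mu> (3 * k + 4) \<noteq> \<mu> (3 * k)))"
proof -
  have "(\<forall>k\<in>{1..n-1}. C k) \<longleftrightarrow> (\<forall>k. Suc k < n \<longrightarrow> C (Suc k))" for C
  proof
    assume C: "\<forall>k. Suc k < n \<longrightarrow> C (Suc k)"
    show "\<forall>k\<in>{1..n-1}. C k"
    proof
      fix k assume "k \<in> {1..n-1}"
      then obtain k' where "k = Suc k'" "Suc k' < n" by (cases k) auto
      then show "C k" using C by simp
    qed
  qed auto
  moreover have "3 * Suc k - 1 = 3 * k + 2" "3 * Suc k = 3 * k + 3" "3 * Suc k + 1 = 3 * k + 4"
    "3 * Suc k - 3 = 3 * k" for k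
    by simp_all
  ultimately show ?thesis
    unfolding locally_valid_def by (simp only: card_filter_three_eq_1_iff)
qed

lemma horizontal_in_border: "3 * j \<in> border n (i, Suc m) \<longleftrightarrow> j = m"
  unfolding border_def by (auto; presburger)

lemma top_in_border:
  "Suc k < n \<Longrightarrow> 3 * k + 2 \<in> border n (i, Suc m) \<longleftrightarrow> i = 1 \<and> (m = k \<or> m = Suc k)"
  unfolding border_def by (auto; presburger)

lemma bottom_in_border:
  "Suc k < n \<Longrightarrow> 3 * k + 4 \<in> border n (i, Suc m) \<longleftrightarrow> i \<noteq> 1 \<and> (m = k \<or> m = Suc k)"
  unfolding border_def by (auto; presburger)

lemma face_flip_horizontal:
  "face_flip n \<mu> (i, Suc m) (3 * j) = (if m = j then - \<mu> (3 * j) else \<mu> (3 * j))"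
  by (auto simp: face_flip_def horizontal_in_border)

lemma face_flip_right_horizontal:
  "face_flip n \<mu> (i, Suc m) (3 * k + 3) = (if m = Suc k then - \<mu> (3 * k + 3) else \<mu> (3 * k + 3))"
proof -
  have "3 * k + 3 = 3 * Suc k" by simp
  then show ?thesis using face_flip_horizontal[of n \<mu> i m "Suc k"] by (simp only:)
qed

lemma face_flip_top:
  "Suc k < n \<Longrightarrow> face_flip n \<mu> (i, Suc m) (3 * k + 2) =
     (if i = 1 \<and> (m = k \<or> m = Suc k) then - \<mu> (3 * k + 2) else \<mu> (3 * k + 2))"
  unfolding face_flip_def by (simp only: top_in_border)

lemma face_flip_bottom:
  "Suc k < n \<Longrightarrow> face_flip n \<mu> (i, Suc m) (3 * k + 4) =
     (if i \<noteq> 1 \<and> (m = k \<or> m = Suc k) then - \<mu> (3 * k + 4) else \<mu> (3 * k + 4))"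
  unfolding face_flip_def by (simp only: bottom_in_border)

lemma unit_step_cases:
  fixes a b :: int
  assumes "\<bar>b - a\<bar> \<le> 1"
  obtains "b = a" | "b = a + 1" | "b = a - 1"
  using assms by linarith

lemma vertex_crease_locally_valid:
  assumes "\<bar>b - a\<bar> \<le> 1" "L = parity_sign (a + x)" "R = parity_sign (b + x + 1)"
  shows "exactly_one (vertex_crease L a b \<noteq> L) (R \<noteq> L) (vertex_crease L b a \<noteq> L)"
  using assms(1) by (cases rule: unit_step_cases)
    (simp_all add: assms(2,3) exactly_one_def vertex_crease_def parity_sign_def)

text \<open>In the following lemmas a and b are the heights at a vertex, L = (-1)^(a + x) and
  R = (-1)^(b + x + 1) its left and right creases, and T says that the face being flipped lies
  in the top row.\<close>

lemma vertex_crease_raise_right: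
  assumes "\<bar>b - a\<bar> \<le> 1" "\<bar>b + s - a\<bar> \<le> 1" "s = 1 \<or> s = -1"
    and "L = parity_sign (a + x)" "T \<longleftrightarrow> parity_sign (b + x + 1) = - s"
  shows "vertex_crease L a (b + s) = (if T then - vertex_crease L a b else vertex_crease L a b)"
    and "vertex_crease L (b + s) a = (if \<not> T then - vertex_crease L b a else vertex_crease L b a)"
  using assms(1)
  by (cases rule: unit_step_cases;
      use assms(2,3) in \<open>auto simp: assms(4,5) vertex_crease_def parity_sign_def\<close>)+

lemma vertex_crease_raise_left:
  assumes "\<bar>b - a\<bar> \<le> 1" "\<bar>b - (a + s)\<bar> \<le> 1" "s = 1 \<or> s = -1"
    and "L = parity_sign (a + x)" "T \<longleftrightarrow> L = - s"
  shows "vertex_crease (- L) (a + s) b = (if T then - vertex_crease L a b else vertex_crease L a b)"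
    and "vertex_crease (- L) b (a + s) = (if \<not> T then - vertex_crease L b a else vertex_crease L b a)"
  using assms(1)
  by (cases rule: unit_step_cases;
      use assms(2,3) in \<open>auto simp: assms(4,5) vertex_crease_def parity_sign_def\<close>)+

lemma flipped_vertex_valid_right:
  assumes "\<bar>b - a\<bar> \<le> 1" "L = parity_sign (a + x)" "R = parity_sign (b + x + 1)"
    and "exactly_one ((if T then - vertex_crease L a b else vertex_crease L a b) \<noteq> L) (- R \<noteq> L)
           ((if \<not> T then - vertex_crease L b a else vertex_crease L b a) \<noteq> L)"
  shows "\<bar>b + (if T then - R else R) - a\<bar> \<le> 1"
  using assms(1)
  by (cases rule: unit_step_cases; use assms(4) in
      \<open>auto simp: assms(2,3) exactly_one_def vertex_crease_def parity_sign_def split: if_splits\<close>)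

lemma flipped_vertex_valid_left:
  assumes "\<bar>b - a\<bar> \<le> 1" "L = parity_sign (a + x)" "R = parity_sign (b + x + 1)"
    and "exactly_one ((if T then - vertex_crease L a b else vertex_crease L a b) \<noteq> - L) (R \<noteq> - L)
           ((if \<not> T then - vertex_crease L b a else vertex_crease L b a) \<noteq> - L)"
  shows "\<bar>b - (a + (if T then - L else L))\<bar> \<le> 1"
  using assms(1)
  by (cases rule: unit_step_cases; use assms(4) in
      \<open>auto simp: assms(2,3) exactly_one_def vertex_crease_def parity_sign_def split: if_splits\<close>)

lemma height_step_from_creases:
  assumes "\<bar>b - a\<bar> \<le> 1"
  shows "b - a = (if parity_sign (b + x + 1) = parity_sign (a + x)
                  then - vertex_crease (parity_sign (a + x)) a b else 0)"
  using assms by (cases rule: unit_step_cases) (simp_all add: vertex_crease_def parity_sign_def)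

section \<open>Lifting MV assignments to height functions\<close>

lemma mv_of_in_ofg_vertices:
  assumes "height_fun n g" and "0 < n"
  shows "mv_of n g \<in> ofg_vertices n"
proof -
  have "mv_assignment n (mv_of n g)"
  proof -
    have unit: "vertex_crease L a b \<in> {1, -1}" if "L \<in> {1, -1}" "\<bar>b - a\<bar> \<le> 1"
      for L a b :: int
      using that by (auto simp: vertex_crease_def)
    have "mv_of n g e \<in> {1, -1}" if "e \<in> creases n" for e
      using that assms(2)
    proof (cases rule: crease_cases)
      case (horizontal j)
      then show ?thesis using parity_sign_cases by (simp add: mv_of_horizontal)
    next
      case (top k)
      then show ?thesis unfolding top(2) mv_of_top[OF top(1)]
        using unit parity_sign_cases height_funD[OF assms(1)] by (simp add: abs_minus_commute)
    next
      case (bottom k)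
      then show ?thesis unfolding bottom(2) mv_of_bottom[OF bottom(1)]
        using unit parity_sign_cases height_funD[OF assms(1)] by (simp add: abs_minus_commute)
    qed
    then show ?thesis unfolding mv_assignment_def by (simp add: mv_of_outside)
  qed
  moreover have "locally_valid n (mv_of n g)"
    unfolding locally_valid_iff
  proof (intro allI impI)
    fix k assume k: "Suc k < n"
    show "exactly_one (mv_of n g (3 * k + 2) \<noteq> mv_of n g (3 * k))
        (mv_of n g (3 * k + 3) \<noteq> mv_of n g (3 * k)) (mv_of n g (3 * k + 4) \<noteq> mv_of n g (3 * k))"
      unfolding mv_of_top[OF k] mv_of_bottom[OF k] mv_of_right_horizontal[OF k]
        mv_of_horizontal[OF Suc_lessD[OF k]]
      by (rule vertex_crease_locally_valid[OF height_funD[OF assms(1) k] refl refl])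
  qed
  ultimately show ?thesis unfolding ofg_vertices_def by blast
qed

lemma height_step_mv_of:
  assumes "height_fun n g" and k: "Suc k < n"
  shows "g (Suc k) - g k =
    (if mv_of n g (3 * k + 3) = mv_of n g (3 * k) then - mv_of n g (3 * k + 2) else 0)"
  unfolding mv_of_right_horizontal[OF k] mv_of_top[OF k] mv_of_horizontal[OF Suc_lessD[OF k]]
  by (rule height_step_from_creases[OF height_funD[OF assms]])

lemma mv_of_eq_iff_even_shift:
  assumes g: "height_fun n g" and h: "height_fun n h" and "0 < n"
  shows "mv_of n g = mv_of n h \<longleftrightarrow> (\<exists>c. \<forall>j<n. h j = g j + 2 * c)"
proof
  assume eq: "mv_of n g = mv_of n h"
  have "h j - g j = h 0 - g 0" if "j < n" for j
    using that
  proof (induction j)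
    case (Suc j)
    have "g (Suc j) - g j = h (Suc j) - h j"
      unfolding height_step_mv_of[OF g Suc.prems] height_step_mv_of[OF h Suc.prems] eq ..
    then show ?case using Suc by simp
  qed simp
  moreover have "even (h 0 - g 0)"
    using arg_cong[OF eq, of "\<lambda>\<mu>. \<mu> 0"] mv_of_horizontal[OF \<open>0 < n\<close>, of g] mv_of_horizontal[OF \<open>0 < n\<close>, of h]
    by (simp add: parity_sign_eq_iff)
  ultimately show "\<exists>c. \<forall>j<n. h j = g j + 2 * c"
    by (metis add.commute diff_add_cancel dvd_def)
next
  assume "\<exists>c. \<forall>j<n. h j = g j + 2 * c"
  then obtain c where c: "\<And>j. j < n \<Longrightarrow> h j = g j + 2 * c" by blast
  have shift: "parity_sign (h j + int j) = parity_sign (g j + int j)" if "j < n" for j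
    using c[OF that] parity_sign_add_even[of "2 * c" "g j + int j"] by (simp add: add_ac)
  have same: "vertex_crease L (h a) (h b) = vertex_crease L (g a) (g b)" if "a < n" "b < n" for L a b
    using c[OF that(1)] c[OF that(2)] by (simp add: vertex_crease_def)
  show "mv_of n g = mv_of n h"
  proof
    fix e
    show "mv_of n g e = mv_of n h e"
    proof (cases "e \<in> creases n")
      case True
      then show ?thesis using \<open>0 < n\<close>
      proof (cases rule: crease_cases)
        case (horizontal j)
        then show ?thesis by (simp add: mv_of_horizontal shift)
      next
        case (top k)
        then show ?thesis unfolding top(2) mv_of_top[OF top(1)] by (simp add: shift same)
      next
        case (bottom k)
        then show ?thesis unfolding bottom(2) mv_of_bottom[OF bottom(1)] by (simp add: shift same)
      qed
    qed (simp add: mv_of_outside)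
  qed
qed

lemma ofg_vertex_crease_value:
  "\<mu> \<in> ofg_vertices n \<Longrightarrow> e \<in> creases n \<Longrightarrow> \<mu> e = 1 \<or> \<mu> e = -1"
  by (auto simp: ofg_vertices_def mv_assignment_def)

lemma ofg_vertex_locally_valid:
  "\<mu> \<in> ofg_vertices n \<Longrightarrow> Suc k < n \<Longrightarrow>
     exactly_one (\<mu> (3 * k + 2) \<noteq> \<mu> (3 * k)) (\<mu> (3 * k + 3) \<noteq> \<mu> (3 * k)) (\<mu> (3 * k + 4) \<noteq> \<mu> (3 * k))"
  by (simp add: ofg_vertices_def locally_valid_iff)

text \<open>The inverse of \<^const>\<open>mv_of\<close>, following the recurrence of \<open>height_step_mv_of\<close>.\<close>

primrec height_of :: "(nat \<Rightarrow> int) \<Rightarrow> nat \<Rightarrow> int" where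
  "height_of \<mu> 0 = (if \<mu> 0 = 1 then 0 else 1)"
| "height_of \<mu> (Suc k) = height_of \<mu> k + (if \<mu> (3 * k + 3) = \<mu> (3 * k) then - \<mu> (3 * k + 2) else 0)"

lemma height_fun_height_of:
  assumes "\<mu> \<in> ofg_vertices n"
  shows "height_fun n (height_of \<mu>)"
  unfolding height_fun_def
proof (intro allI impI)
  fix k assume "Suc k < n"
  then have "\<mu> (3 * k + 2) = 1 \<or> \<mu> (3 * k + 2) = -1"
    using ofg_vertex_crease_value[OF assms top_in_creases] by blast
  then show "\<bar>height_of \<mu> (Suc k) - height_of \<mu> k\<bar> \<le> 1" by auto
qed

lemma horizontal_height_of:
  assumes \<mu>: "\<mu> \<in> ofg_vertices n"
  shows "j < n \<Longrightarrow> \<mu> (3 * j) = parity_sign (height_of \<mu> j + int j)"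
proof (induction j)
  case 0
  then show ?case using ofg_vertex_crease_value[OF \<mu> horizontal_in_creases[OF 0]]
    by (auto simp: parity_sign_def)
next
  case (Suc j)
  have "\<mu> (3 * j + 3) = 1 \<or> \<mu> (3 * j + 3) = -1"
    using ofg_vertex_crease_value[OF \<mu> horizontal_in_creases[OF Suc.prems]] by (simp add: add_ac)
  moreover have "\<mu> (3 * j) = 1 \<or> \<mu> (3 * j) = -1"
    using ofg_vertex_crease_value[OF \<mu> horizontal_in_creases] Suc.prems by simp
  moreover have "\<mu> (3 * j + 2) = 1 \<or> \<mu> (3 * j + 2) = -1"
    using ofg_vertex_crease_value[OF \<mu> top_in_creases[OF Suc.prems]] .
  moreover have "3 * Suc j = 3 * j + 3" by simp
  ultimately show ?case
    using Suc by (simp only:) (auto simp: parity_sign_def)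
qed

lemma vertex_crease_reconstruct:
  fixes L T R B :: int
  assumes "exactly_one (T \<noteq> L) (R \<noteq> L) (B \<noteq> L)" and "L \<in> {1, -1}" "T \<in> {1, -1}" "B \<in> {1, -1}"
  shows "vertex_crease L a (a + (if R = L then - T else 0)) = T"
    and "vertex_crease L (a + (if R = L then - T else 0)) a = B"
  using assms by (auto simp: exactly_one_def vertex_crease_def)

lemma mv_of_height_of:
  assumes \<mu>: "\<mu> \<in> ofg_vertices n" and "0 < n"
  shows "mv_of n (height_of \<mu>) = \<mu>"
proof -
  have vertex: "mv_of n (height_of \<mu>) (3 * k + 2) = \<mu> (3 * k + 2) \<and>
      mv_of n (height_of \<mu>) (3 * k + 4) = \<mu> (3 * k + 4)" if k: "Suc k < n" for k
  proof -
    have "\<mu> (3 * k + 2) \<in> {1, -1}" "\<mu> (3 * k + 4) \<in> {1, -1}" "\<mu> (3 * k) \<in> {1, -1}"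
      using ofg_vertex_crease_value[OF \<mu>] top_in_creases[OF k] bottom_in_creases[OF k]
        horizontal_in_creases[OF Suc_lessD[OF k]] by auto
    then show ?thesis
      unfolding mv_of_top[OF k] mv_of_bottom[OF k] horizontal_height_of[OF \<mu> Suc_lessD[OF k], symmetric]
      using vertex_crease_reconstruct[OF ofg_vertex_locally_valid[OF \<mu> k]] by simp
  qed
  show ?thesis
  proof
    fix e
    show "mv_of n (height_of \<mu>) e = \<mu> e"
    proof (cases "e \<in> creases n")
      case True
      then show ?thesis using \<open>0 < n\<close>
      proof (cases rule: crease_cases)
        case (horizontal j)
        then show ?thesis by (simp add: mv_of_horizontal horizontal_height_of[OF \<mu>])
      qed (use vertex in \<open>simp only:\<close>)+
    qed (use \<mu> in \<open>simp add: mv_of_outside ofg_vertices_def mv_assignment_def\<close>)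
  qed
qed

lemma ofg_vertices_eq_image:
  assumes "0 < n"
  shows "ofg_vertices n = mv_of n ` {g. height_fun n g}"
  using mv_of_in_ofg_vertices[OF _ assms] height_fun_height_of mv_of_height_of[OF _ assms]
  by (auto intro!: image_eqI)

section \<open>Face flips are unit steps of height functions\<close>

lemma face_flip_mv_of_at_vertex:
  fixes g :: "nat \<Rightarrow> int" and i m :: nat
  assumes k: "Suc k < n"
  defines "L \<equiv> parity_sign (g k + int k)" and "R \<equiv> parity_sign (g (Suc k) + int k + 1)"
    and "\<mu> \<equiv> face_flip n (mv_of n g) (i, Suc m)"
  shows "\<mu> (3 * k) = (if m = k then - L else L)"
    and "\<mu> (3 * k + 3) = (if m = Suc k then - R else R)"
    and "\<mu> (3 * k + 2) = (if i = 1 \<and> (m = k \<or> m = Suc k)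
      then - vertex_crease L (g k) (g (Suc k)) else vertex_crease L (g k) (g (Suc k)))"
    and "\<mu> (3 * k + 4) = (if i \<noteq> 1 \<and> (m = k \<or> m = Suc k)
      then - vertex_crease L (g (Suc k)) (g k) else vertex_crease L (g (Suc k)) (g k))"
  unfolding \<mu>_def L_def R_def face_flip_horizontal face_flip_right_horizontal face_flip_top[OF k]
    face_flip_bottom[OF k] mv_of_horizontal[OF Suc_lessD[OF k]] mv_of_right_horizontal[OF k]
    mv_of_top[OF k] mv_of_bottom[OF k]
  by (rule refl)+

lemma face_flip_mv_of_step:
  assumes g: "height_fun n g" and g': "height_fun n (g(m := g m + s))"
    and m: "m < n" and s: "s = 1 \<or> s = -1"
  shows "face_flip n (mv_of n g) (if parity_sign (g m + int m) = - s then 1 else 2, Suc m)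
           = mv_of n (g(m := g m + s))"
    (is "face_flip n _ (?i, _) = mv_of n ?g'")
proof -
  let ?T = "parity_sign (g m + int m) = - s"
  let ?flip = "face_flip n (mv_of n g) (?i, Suc m)"
  have flip_horizontal: "?flip (3 * j) = mv_of n ?g' (3 * j)" if "j < n" for j
    using that parity_sign_add_unit[OF s, of "g m + int m"]
    by (auto simp: face_flip_horizontal mv_of_horizontal add_ac)
  have flip_vertex:
    "?flip (3 * k + 2) = mv_of n ?g' (3 * k + 2) \<and> ?flip (3 * k + 4) = mv_of n ?g' (3 * k + 4)"
    if k: "Suc k < n" for k
  proof -
    note flip = face_flip_mv_of_at_vertex(3,4)[OF k, where g = g and i = ?i and m = m]
    consider "m = Suc k" | "m = k" | "m \<noteq> k" "m \<noteq> Suc k" by blast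
    then show ?thesis
    proof cases
      case 1
      have "\<bar>g m - g k\<bar> \<le> 1" "\<bar>g m + s - g k\<bar> \<le> 1"
        using height_funD[OF g k] height_funD[OF g' k] 1 by simp_all
      from vertex_crease_raise_right[OF this s refl, where x = "int k" and T = ?T]
      show ?thesis
        unfolding flip mv_of_top[OF k] mv_of_bottom[OF k] using 1 by (simp add: add_ac)
    next
      case 2
      have "\<bar>g (Suc m) - g m\<bar> \<le> 1" "\<bar>g (Suc m) - (g m + s)\<bar> \<le> 1"
        using height_funD[OF g k] height_funD[OF g' k] 2 by simp_all
      from vertex_crease_raise_left[OF this s refl, where x = "int m" and T = ?T]
      show ?thesis
        unfolding flip mv_of_top[OF k] mv_of_bottom[OF k]
        using 2 parity_sign_add_unit[OF s, of "g m + int m"] by (simp add: add_ac)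
    next
      case 3
      then show ?thesis unfolding flip mv_of_top[OF k] mv_of_bottom[OF k] by simp
    qed
  qed
  show ?thesis
  proof
    fix e
    show "?flip e = mv_of n ?g' e"
    proof (cases "e \<in> creases n")
      case True
      moreover have "0 < n" using m by simp
      ultimately show ?thesis
      proof (cases rule: crease_cases)
        case (horizontal j)
        then show ?thesis using flip_horizontal by (simp only:)
      qed (use flip_vertex in \<open>simp only:\<close>)+
    qed (simp add: face_flip_def mv_of_outside border_def creases_def)
  qed
qed

lemma flippable_height_fun_step:
  assumes g: "height_fun n g" and fl: "flippable n (mv_of n g) (i, Suc m)"
  defines "s \<equiv> (if i = 1 then - parity_sign (g m + int m) else parity_sign (g m + int m))"
  shows "height_fun n (g(m := g m + s))"
  unfolding height_fun_def
proof (intro allI impI)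
  fix k assume k: "Suc k < n"
  let ?\<mu> = "face_flip n (mv_of n g) (i, Suc m)"
  have "exactly_one (?\<mu> (3 * k + 2) \<noteq> ?\<mu> (3 * k)) (?\<mu> (3 * k + 3) \<noteq> ?\<mu> (3 * k))
      (?\<mu> (3 * k + 4) \<noteq> ?\<mu> (3 * k))"
    using fl k by (simp add: flippable_def locally_valid_iff)
  note valid = this[unfolded face_flip_mv_of_at_vertex[OF k]]
  let ?L = "parity_sign (g k + int k)" and ?R = "parity_sign (g (Suc k) + int k + 1)"
  let ?top = "vertex_crease ?L (g k) (g (Suc k))" and ?bot = "vertex_crease ?L (g (Suc k)) (g k)"
  consider "m = Suc k" | "m = k" | "m \<noteq> k" "m \<noteq> Suc k" by blast
  then show "\<bar>(g(m := g m + s)) (Suc k) - (g(m := g m + s)) k\<bar> \<le> 1"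
  proof cases
    case 1
    have "exactly_one ((if i = 1 then - ?top else ?top) \<noteq> ?L) (- ?R \<noteq> ?L)
        ((if i \<noteq> 1 then - ?bot else ?bot) \<noteq> ?L)"
      using valid 1 by simp
    from flipped_vertex_valid_right[OF height_funD[OF g k] refl refl this]
    have "\<bar>g (Suc k) + (if i = 1 then - ?R else ?R) - g k\<bar> \<le> 1" .
    moreover have "s = (if i = 1 then - ?R else ?R)" using 1 by (simp add: s_def add_ac)
    ultimately show ?thesis using 1 by simp
  next
    case 2
    have "exactly_one ((if i = 1 then - ?top else ?top) \<noteq> - ?L) (?R \<noteq> - ?L)
        ((if i \<noteq> 1 then - ?bot else ?bot) \<noteq> - ?L)"
      using valid 2 by simp
    from flipped_vertex_valid_left[OF height_funD[OF g k] refl refl this]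
    have "\<bar>g (Suc k) - (g k + (if i = 1 then - ?L else ?L))\<bar> \<le> 1" .
    moreover have "s = (if i = 1 then - ?L else ?L)" using 2 by (simp add: s_def)
    ultimately show ?thesis using 2 by simp
  next
    case 3
    then show ?thesis using height_funD[OF g k] by simp
  qed
qed

lemma ofg_edge_of_height_step:
  assumes "height_fun n g" "height_fun n (g(m := g m + s))" "m < n" "s = 1 \<or> s = -1"
  shows "(mv_of n g, mv_of n (g(m := g m + s))) \<in> ofg_edges n"
proof -
  let ?f = "(if parity_sign (g m + int m) = - s then 1 else 2, Suc m)"
  have "0 < n" using \<open>m < n\<close> by simp
  have "?f \<in> faces n" using \<open>m < n\<close> by (simp add: faces_def)
  moreover have "face_flip n (mv_of n g) ?f = mv_of n (g(m := g m + s))"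
    using face_flip_mv_of_step[OF assms] .
  moreover have "mv_of n g \<in> ofg_vertices n" "mv_of n (g(m := g m + s)) \<in> ofg_vertices n"
    using mv_of_in_ofg_vertices assms(1,2) \<open>0 < n\<close> by blast+
  ultimately show ?thesis
    unfolding ofg_edges_def flippable_def ofg_vertices_def by force
qed

lemma ofg_edge_lifts_to_height_step:
  assumes edge: "(mv_of n g, \<nu>) \<in> ofg_edges n" and g: "height_fun n g"
  obtains m s where "m < n" "s = 1 \<or> s = -1" "height_fun n (g(m := g m + s))"
    "\<nu> = mv_of n (g(m := g m + s))"
proof -
  obtain f where "f \<in> faces n" "flippable n (mv_of n g) f" "\<nu> = face_flip n (mv_of n g) f"
    using edge unfolding ofg_edges_def by blast
  moreover obtain i m where "f = (i, Suc m)"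
    using \<open>f \<in> faces n\<close> by (auto simp: faces_def Suc_le_eq gr0_conv_Suc)
  ultimately have f: "(i, Suc m) \<in> faces n" and fl: "flippable n (mv_of n g) (i, Suc m)"
    and \<nu>: "\<nu> = face_flip n (mv_of n g) (i, Suc m)" by simp_all
  define s where "s = (if i = 1 then - parity_sign (g m + int m) else parity_sign (g m + int m))"
  have m: "m < n" and i: "i = 1 \<or> i = 2" using f by (auto simp: faces_def)
  have s: "s = 1 \<or> s = -1" using parity_sign_cases[of "g m + int m"] by (auto simp: s_def)
  have g': "height_fun n (g(m := g m + s))"
    using flippable_height_fun_step[OF g fl] unfolding s_def .
  have "(if parity_sign (g m + int m) = - s then 1 else 2) = i"
    using i parity_sign_cases[of "g m + int m"] by (auto simp: s_def)
  then have "\<nu> = mv_of n (g(m := g m + s))"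
    using face_flip_mv_of_step[OF g g' m s] \<nu> by simp
  with that m s g' show thesis by blast
qed

lemma sum_abs_diff_fun_upd:
  fixes g h :: "nat \<Rightarrow> int"
  assumes "m < n"
  shows "(\<Sum>j<n. \<bar>(g(m := v)) j - h j\<bar>) = (\<Sum>j<n. \<bar>g j - h j\<bar>) - \<bar>g m - h m\<bar> + \<bar>v - h m\<bar>"
proof -
  have m: "m \<in> {..<n}" using assms by simp
  have "(\<Sum>j<n. \<bar>(g(m := v)) j - h j\<bar>) =
      \<bar>v - h m\<bar> + (\<Sum>j\<in>{..<n} - {m}. \<bar>(g(m := v)) j - h j\<bar>)"
    using sum.remove[OF _ m, of "\<lambda>j. \<bar>(g(m := v)) j - h j\<bar>"] by simp
  also have "(\<Sum>j\<in>{..<n} - {m}. \<bar>(g(m := v)) j - h j\<bar>) =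
      (\<Sum>j\<in>{..<n} - {m}. \<bar>g j - h j\<bar>)"
    by (rule sum.cong) auto
  also have "\<dots> = (\<Sum>j<n. \<bar>g j - h j\<bar>) - \<bar>g m - h m\<bar>"
    using sum.remove[OF _ m, of "\<lambda>j. \<bar>g j - h j\<bar>"] by simp
  finally show ?thesis by simp
qed

lemma height_fun_uminus: "height_fun n (\<lambda>j. - g j) \<longleftrightarrow> height_fun n g"
  unfolding height_fun_def by (simp add: abs_minus_commute)

lemma height_fun_lower_local_max:
  assumes g: "height_fun n g"
    and max: "\<And>j. j < n \<Longrightarrow> Suc j = m \<or> j = Suc m \<Longrightarrow> g j \<le> g m"
  shows "height_fun n (g(m := g m - 1))"
  unfolding height_fun_def
proof (intro allI impI)
  fix k assume k: "Suc k < n"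
  consider "Suc k = m" | "k = m" | "Suc k \<noteq> m" "k \<noteq> m" by blast
  then show "\<bar>(g(m := g m - 1)) (Suc k) - (g(m := g m - 1)) k\<bar> \<le> 1"
  proof cases
    case 1
    then show ?thesis using height_funD[OF g k] max[of k] k by simp
  next
    case 2
    then show ?thesis using height_funD[OF g k] max[of "Suc k"] k by simp
  qed (use height_funD[OF g k] in simp)
qed

lemma height_fun_step_down:
  assumes g: "height_fun n g" and h: "height_fun n h" and above: "\<exists>j<n. h j < g j"
  obtains m where "m < n" "h m < g m" "height_fun n (g(m := g m - 1))"
proof -
  txt \<open>Lower g where g - h is maximal and, among those points, g is maximal: there both
    neighbours lie below g.\<close>
  define M where "M = Max ((\<lambda>j. g j - h j) ` {..<n})"
  define S where "S = {j. j < n \<and> g j - h j = M}"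
  have M_ge: "g j - h j \<le> M" if "j < n" for j
    unfolding M_def using that by (intro Max_ge) auto
  have "M \<in> (\<lambda>j. g j - h j) ` {..<n}"
    unfolding M_def using above by (intro Max_in) auto
  then have "S \<noteq> {}" unfolding S_def by auto
  moreover have "finite S" unfolding S_def by simp
  ultimately have "Max (g ` S) \<in> g ` S" by simp
  then obtain m where "m \<in> S" and m_Max: "g m = Max (g ` S)" by auto
  have m_max: "g j \<le> g m" if "j \<in> S" for j
    using \<open>finite S\<close> that m_Max by simp
  have m: "m < n" "g m - h m = M" using \<open>m \<in> S\<close> unfolding S_def by auto
  have "0 < M" using above M_ge by fastforce
  have "g j \<le> g m" if j: "j < n" "Suc j = m \<or> j = Suc m" for j
  proof (rule ccontr)
    assume "\<not> g j \<le> g m"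
    moreover have "\<bar>g j - g m\<bar> \<le> 1" "\<bar>h j - h m\<bar> \<le> 1"
      using j m(1) height_funD[OF g] height_funD[OF h] by (auto simp: abs_minus_commute)
    ultimately have "j \<in> S" "g m < g j"
      using M_ge[OF j(1)] m(2) unfolding S_def by (auto simp: j(1))
    then show False using m_max by fastforce
  qed
  then have "height_fun n (g(m := g m - 1))" by (rule height_fun_lower_local_max[OF g])
  then show thesis using that m \<open>0 < M\<close> by simp
qed

lemma height_fun_step_towards:
  assumes g: "height_fun n g" and h: "height_fun n h" and "\<exists>j<n. g j \<noteq> h j"
  obtains m s where "m < n" "s = 1 \<or> s = -1" "height_fun n (g(m := g m + s))"
    "\<bar>g m + s - h m\<bar> = \<bar>g m - h m\<bar> - 1"
proof (cases "\<exists>j<n. h j < g j")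
  case True
  then obtain m where "m < n" "h m < g m" "height_fun n (g(m := g m - 1))"
    using height_fun_step_down[OF g h] by blast
  then show thesis using that[of m "-1"] by simp
next
  case False
  then have "\<exists>j<n. - h j < - g j" using assms(3) by force
  then obtain m where m: "m < n" "h m > g m" "height_fun n ((\<lambda>j. - g j)(m := - g m - 1))"
    using height_fun_step_down[of n "\<lambda>j. - g j" "\<lambda>j. - h j"] g h height_fun_uminus by auto
  have "(\<lambda>j. - g j)(m := - g m - 1) = (\<lambda>j. - (g(m := g m + 1)) j)" by auto
  with m(3) have "height_fun n (g(m := g m + 1))"
    by (simp only: height_fun_uminus)
  then show thesis using that[of m 1] m(1,2) by simp
qed

lemma ofg_path_between_heights:
  assumes g: "height_fun n g" and h: "height_fun n h" and "0 < n"
  shows "(mv_of n g, mv_of n h) \<in> ofg_edges n ^^ nat (\<Sum>j<n. \<bar>g j - h j\<bar>)"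
  using g
proof (induction "nat (\<Sum>j<n. \<bar>g j - h j\<bar>)" arbitrary: g)
  case 0
  have "0 \<le> (\<Sum>j<n. \<bar>g j - h j\<bar>)" by (simp add: sum_nonneg)
  with 0(1) have "(\<Sum>j<n. \<bar>g j - h j\<bar>) = 0" by linarith
  then have "\<forall>j<n. g j = h j"
    using sum_nonneg_eq_0_iff[of "{..<n}" "\<lambda>j. \<bar>g j - h j\<bar>"] by simp
  then have "mv_of n g = mv_of n h"
    unfolding mv_of_eq_iff_even_shift[OF 0(2) h \<open>0 < n\<close>] by (intro exI[of _ 0]) simp
  then show ?case by (simp add: 0(1)[symmetric])
next
  case (Suc d)
  have "\<exists>j<n. g j \<noteq> h j"
  proof (rule ccontr)
    assume "\<not> (\<exists>j<n. g j \<noteq> h j)"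
    then have "(\<Sum>j<n. \<bar>g j - h j\<bar>) = 0" by simp
    with Suc.hyps(2) show False by simp
  qed
  then obtain m s where m: "m < n" "s = 1 \<or> s = -1" "height_fun n (g(m := g m + s))"
    "\<bar>g m + s - h m\<bar> = \<bar>g m - h m\<bar> - 1"
    using height_fun_step_towards[OF Suc.prems h] by blast
  have "d = nat (\<Sum>j<n. \<bar>(g(m := g m + s)) j - h j\<bar>)"
    using Suc.hyps(2) m(4) sum_abs_diff_fun_upd[OF m(1), of g "g m + s" h] by simp
  then have "(mv_of n (g(m := g m + s)), mv_of n h) \<in> ofg_edges n ^^ d"
    using Suc.hyps(1) m(3) by blast
  moreover have "(mv_of n g, mv_of n (g(m := g m + s))) \<in> ofg_edges n"
    using ofg_edge_of_height_step[OF Suc.prems m(3,1,2)] .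
  ultimately show ?case
    unfolding Suc.hyps(2)[symmetric] by (rule relpow_Suc_I2[rotated])
qed

lemma ofg_path_lifts:
  assumes g0: "height_fun n g0"
  shows "(mv_of n g0, \<nu>) \<in> ofg_edges n ^^ k \<Longrightarrow>
    \<exists>g. height_fun n g \<and> mv_of n g = \<nu> \<and> (\<Sum>j<n. \<bar>g j - g0 j\<bar>) \<le> int k"
proof (induction k arbitrary: \<nu>)
  case 0
  then show ?case using g0 by auto
next
  case (Suc k)
  then obtain \<mu> where "(mv_of n g0, \<mu>) \<in> ofg_edges n ^^ k" and edge: "(\<mu>, \<nu>) \<in> ofg_edges n"
    by auto
  with Suc.IH obtain g where g: "height_fun n g" "mv_of n g = \<mu>" "(\<Sum>j<n. \<bar>g j - g0 j\<bar>) \<le> int k"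
    by blast
  obtain m s where m: "m < n" "s = 1 \<or> s = -1" "height_fun n (g(m := g m + s))"
    "\<nu> = mv_of n (g(m := g m + s))"
    using ofg_edge_lifts_to_height_step[OF edge[folded g(2)] g(1)] by blast
  have "\<bar>g m + s - g0 m\<bar> \<le> \<bar>g m - g0 m\<bar> + 1" using m(2) by auto
  then have "(\<Sum>j<n. \<bar>(g(m := g m + s)) j - g0 j\<bar>) \<le> int (Suc k)"
    using sum_abs_diff_fun_upd[OF m(1), of g "g m + s" g0] g(3) by simp
  then show ?case using m(3,4) by blast
qed

section \<open>Two extremal sums\<close>

lemma sum_lessThan_Suc_Suc_ends:
  "(\<Sum>j<Suc (Suc k). f j) = f 0 + (\<Sum>j<k. f (Suc j)) + (f (Suc k) :: 'a::comm_monoid_add)"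
proof -
  have "(\<Sum>j<Suc (Suc k). f j) = (\<Sum>j<Suc k. f j) + f (Suc k)" by (rule sum.lessThan_Suc)
  also have "(\<Sum>j<Suc k. f j) = f 0 + (\<Sum>j<k. f (Suc j))" by (rule sum.lessThan_Suc_shift)
  finally show ?thesis .
qed

lemma half_square_Suc_Suc: "(Suc (Suc k) * Suc (Suc k) + 1) div 2 = (k * k + 1) div 2 + 2 * k + 2"
proof -
  have "Suc (Suc k) * Suc (Suc k) + 1 = (k * k + 1) + 2 * (2 * k + 2)" by (simp add: algebra_simps)
  then show ?thesis by simp
qed

lemma ceiling_half_square: "nat \<lceil>(real n)\<^sup>2 / 2\<rceil> = (n * n + 1) div 2"
proof -
  define q where "q = (n * n + 1) div 2"
  have "n * n = 2 * q \<or> n * n + 1 = 2 * q" unfolding q_def by presburger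
  then have "real n ^ 2 = 2 * real q \<or> real n ^ 2 + 1 = 2 * real q"
    unfolding power2_eq_square by (metis of_nat_1 of_nat_add of_nat_mult of_nat_numeral)
  then have "\<lceil>(real n)\<^sup>2 / 2\<rceil> = int q"
    by (auto intro: ceiling_unique)
  then show ?thesis unfolding q_def by simp
qed

lemma sum_abs_odd_sub_even_ge: "int ((n * n + 1) div 2) \<le> (\<Sum>j<n. \<bar>2 * int j + 1 - 2 * c\<bar>)"
proof (induction n arbitrary: c rule: less_induct)
  case (less n)
  consider "n = 0" | "n = 1" | k where "n = Suc (Suc k)"
    by (metis One_nat_def not0_implies_Suc)
  then show ?case
  proof cases
    case 3
    have "int ((k * k + 1) div 2) \<le> (\<Sum>j<k. \<bar>2 * int (Suc j) + 1 - 2 * c\<bar>)"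
      using less.IH[of k "c - 1"] 3 by (simp add: algebra_simps)
    moreover have "2 * int k + 2 \<le> \<bar>1 - 2 * c\<bar> + \<bar>2 * int (Suc k) + 1 - 2 * c\<bar>" by simp
    ultimately show ?thesis
      unfolding 3 sum_lessThan_Suc_Suc_ends half_square_Suc_Suc by simp
  qed (simp_all, presburger)
qed

lemma two_point_even_center:
  fixes a b :: int
  assumes "\<bar>b - a\<bar> \<le> 2"
  obtains c where "\<bar>a - 2 * c\<bar> + \<bar>b - 2 * c\<bar> \<le> 2"
proof (cases "a \<le> b")
  case True
  have "2 * ((a + 1) div 2) = a \<or> 2 * ((a + 1) div 2) = a + 1" by presburger
  then show ?thesis using that[of "(a + 1) div 2"] True assms by linarith
next
  case False
  have "2 * (a div 2) = a \<or> 2 * (a div 2) = a - 1" by presburger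
  then show ?thesis using that[of "a div 2"] False assms by linarith
qed

lemma three_point_even_center:
  fixes a b e :: int
  assumes "\<bar>b - a\<bar> \<le> 2" "\<bar>e - b\<bar> \<le> 2"
  obtains c where "\<bar>a - 2 * c\<bar> + \<bar>b - 2 * c\<bar> + \<bar>e - 2 * c\<bar> \<le> 5"
    "\<bar>a - 2 * c\<bar> + \<bar>e - 2 * c\<bar> \<le> 4"
proof -
  consider "even b" | "odd b" "2 * b \<le> a + e" | "odd b" "a + e < 2 * b" by linarith
  then show thesis
  proof cases
    case 1
    then have "2 * (b div 2) = b" by simp
    then show ?thesis using that[of "b div 2"] assms by linarith
  next
    case 2
    then have "2 * ((b + 1) div 2) = b + 1" by presburger
    then show ?thesis using that[of "(b + 1) div 2"] assms 2(2) by linarith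
  next
    case 3
    then have "2 * ((b - 1) div 2) = b - 1" by presburger
    then show ?thesis using that[of "(b - 1) div 2"] assms 3(2) by linarith
  qed
qed

text \<open>The bound on the two end terms is what lets the induction from n to n + 2 pay for
  the two new end terms.\<close>

lemma sum_abs_sub_even_le_with_ends:
  assumes "2 \<le> n" and "\<And>j. Suc j < n \<Longrightarrow> \<bar>d (Suc j) - d j\<bar> \<le> 2"
  shows "\<exists>c. (\<Sum>j<n. \<bar>d j - 2 * c\<bar>) \<le> int ((n * n + 1) div 2) \<and>
    \<bar>d 0 - 2 * c\<bar> + \<bar>d (n - 1) - 2 * c\<bar> \<le> 2 * int n - 2"
  using assms
proof (induction n arbitrary: d rule: less_induct)
  case (less n)
  obtain k where n: "n = Suc (Suc k)" using less.prems(1) by (metis add_2_eq_Suc le_Suc_ex)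
  have step: "\<bar>d (Suc j) - d j\<bar> \<le> 2" if "Suc j < n" for j using less.prems(2) that .
  consider "k = 0" | "k = 1" | "2 \<le> k" by linarith
  then show ?case
  proof cases
    case 1
    have "\<bar>d 1 - d 0\<bar> \<le> 2" using step[of 0] n 1 by simp
    then obtain c where "\<bar>d 0 - 2 * c\<bar> + \<bar>d 1 - 2 * c\<bar> \<le> 2"
      by (rule two_point_even_center)
    moreover have "n = 2" using n 1 by simp
    ultimately show ?thesis by (intro exI[of _ c]) (simp add: lessThan_nat_numeral)
  next
    case 2
    have "\<bar>d 1 - d 0\<bar> \<le> 2" "\<bar>d 2 - d 1\<bar> \<le> 2"
      using step[of 0] step[of 1] n 2 by (simp_all add: numeral_2_eq_2)
    then obtain c where "\<bar>d 0 - 2 * c\<bar> + \<bar>d 1 - 2 * c\<bar> + \<bar>d 2 - 2 * c\<bar> \<le> 5"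
      "\<bar>d 0 - 2 * c\<bar> + \<bar>d 2 - 2 * c\<bar> \<le> 4"
      by (rule three_point_even_center)
    moreover have "n = 3" using n 2 by simp
    ultimately show ?thesis by (intro exI[of _ c]) (simp add: lessThan_nat_numeral)
  next
    case 3
    obtain c where IH: "(\<Sum>j<k. \<bar>d (Suc j) - 2 * c\<bar>) \<le> int ((k * k + 1) div 2)"
      "\<bar>d 1 - 2 * c\<bar> + \<bar>d k - 2 * c\<bar> \<le> 2 * int k - 2"
      using less.IH[of k "\<lambda>j. d (Suc j)"] step n 3 by auto
    have "\<bar>d 0 - 2 * c\<bar> \<le> \<bar>d 1 - 2 * c\<bar> + 2" "\<bar>d (Suc k) - 2 * c\<bar> \<le> \<bar>d k - 2 * c\<bar> + 2"
      using step[of 0] step[of k] n by auto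
    with IH show ?thesis
      unfolding n sum_lessThan_Suc_Suc_ends half_square_Suc_Suc by (intro exI[of _ c]) simp
  qed
qed

lemma even_shift_sum_abs_le:
  assumes "\<And>j. Suc j < n \<Longrightarrow> \<bar>d (Suc j) - d j\<bar> \<le> 2"
  obtains c where "(\<Sum>j<n. \<bar>d j - 2 * c\<bar>) \<le> int ((n * n + 1) div 2)"
proof (cases "n \<le> 1")
  case True
  have "\<bar>d 0 - 2 * (d 0 div 2)\<bar> \<le> 1" by presburger
  with True show thesis using that[of "d 0 div 2"] by (cases n) auto
next
  case False
  then show thesis using sum_abs_sub_even_le_with_ends[of n d] assms that by force
qed

lemma ofg_dist_le_path_length: "(\<mu>, \<nu>) \<in> ofg_edges n ^^ k \<Longrightarrow> ofg_dist n \<mu> \<nu> \<le> enat k"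
  unfolding ofg_dist_def by (rule INF_lower) simp

lemma ofg_dist_ge_if_paths_ge:
  "(\<And>k. (\<mu>, \<nu>) \<in> ofg_edges n ^^ k \<Longrightarrow> N \<le> k) \<Longrightarrow> enat N \<le> ofg_dist n \<mu> \<nu>"
  unfolding ofg_dist_def by (rule INF_greatest) simp

lemma ofg_dist_le_half_square:
  assumes "0 < n" and \<mu>: "\<mu> \<in> ofg_vertices n" and \<nu>: "\<nu> \<in> ofg_vertices n"
  shows "ofg_dist n \<mu> \<nu> \<le> enat ((n * n + 1) div 2)"
proof -
  obtain g h where g: "height_fun n g" "\<mu> = mv_of n g" and h: "height_fun n h" "\<nu> = mv_of n h"
    using \<mu> \<nu> unfolding ofg_vertices_eq_image[OF \<open>0 < n\<close>] by blast
  have "\<bar>(g (Suc j) - h (Suc j)) - (g j - h j)\<bar> \<le> 2" if "Suc j < n" for j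
    using height_funD[OF g(1) that] height_funD[OF h(1) that] by linarith
  then obtain c where c: "(\<Sum>j<n. \<bar>(g j - h j) - 2 * c\<bar>) \<le> int ((n * n + 1) div 2)"
    by (rule even_shift_sum_abs_le)
  define h' where "h' j = h j + 2 * c" for j
  have h': "height_fun n h'" using h(1) by (simp add: height_fun_def h'_def)
  have "\<nu> = mv_of n h'"
    using h(2) mv_of_eq_iff_even_shift[OF h(1) h' \<open>0 < n\<close>] by (auto simp: h'_def)
  then have "ofg_dist n \<mu> \<nu> \<le> enat (nat (\<Sum>j<n. \<bar>g j - h' j\<bar>))"
    using ofg_path_between_heights[OF g(1) h' \<open>0 < n\<close>] g(2) by (simp add: ofg_dist_le_path_length)
  also have "(\<Sum>j<n. \<bar>g j - h' j\<bar>) = (\<Sum>j<n. \<bar>(g j - h j) - 2 * c\<bar>)"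
    by (simp add: h'_def algebra_simps)
  also have "enat (nat \<dots>) \<le> enat ((n * n + 1) div 2)"
    using c by simp
  finally show ?thesis .
qed

lemma ofg_dist_ge_half_square:
  assumes "0 < n"
  shows "enat ((n * n + 1) div 2) \<le> ofg_dist n (mv_of n int) (mv_of n (\<lambda>j. - int j - 1))"
proof (rule ofg_dist_ge_if_paths_ge)
  fix k assume "(mv_of n int, mv_of n (\<lambda>j. - int j - 1)) \<in> ofg_edges n ^^ k"
  moreover have source: "height_fun n int" and target: "height_fun n (\<lambda>j. - int j - 1)"
    by (simp_all add: height_fun_def)
  ultimately obtain g where g: "height_fun n g" "mv_of n g = mv_of n (\<lambda>j. - int j - 1)"
    and len: "(\<Sum>j<n. \<bar>g j - int j\<bar>) \<le> int k"
    using ofg_path_lifts by blast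
  obtain c where "\<forall>j<n. g j = - int j - 1 + 2 * c"
    using g mv_of_eq_iff_even_shift[OF target g(1) \<open>0 < n\<close>] by auto
  then have "(\<Sum>j<n. \<bar>g j - int j\<bar>) = (\<Sum>j<n. \<bar>2 * int j + 1 - 2 * c\<bar>)"
    by (intro sum.cong) auto
  with len sum_abs_odd_sub_even_ge[of n c] show "(n * n + 1) div 2 \<le> k" by linarith
qed

theorem corollary5p9:
  fixes n :: nat
  assumes "n \<ge> 2"
  shows "ofg_diameter n = enat (nat \<lceil>(real n)^2 / 2\<rceil>)"
proof -
  have n: "0 < n" using assms by simp
  have "ofg_diameter n \<le> enat ((n * n + 1) div 2)"
    unfolding ofg_diameter_def by (intro SUP_least ofg_dist_le_half_square[OF n])
  moreover have "enat ((n * n + 1) div 2) \<le> ofg_diameter n"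
  proof -
    have "mv_of n int \<in> ofg_vertices n" "mv_of n (\<lambda>j. - int j - 1) \<in> ofg_vertices n"
      by (simp_all add: mv_of_in_ofg_vertices n height_fun_def)
    then show ?thesis
      unfolding ofg_diameter_def
      by (intro SUP_upper2[of "mv_of n int"] SUP_upper2[of "mv_of n (\<lambda>j. - int j - 1)"]
          ofg_dist_ge_half_square[OF n])
  qed
  ultimately show ?thesis by (simp add: ceiling_half_square)
qed

end
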